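(* With $\iota^\sharp\colon FL_H \to FL_G$, $\pi_1,\pi_2\colon FL_H \to \mathbf{P}^1$ and the cells as in the context, one has \[ (\iota^\sharp)^{-1}\left(X^G_{w_2}\right) \cap \pi_2^{-1}\left(Y^{\mathrm{GL}_2}_{w}\right) = (\iota^\sharp)^{-1}\left(C^G_{w_2}\right) \cap \pi_1^{-1}\left(C^{\mathrm{GL}_2}_w \cdot w^{-1}\right) \cap \pi_2^{-1}\left(C^{\mathrm{GL}_2}_{w}\right). \]
   Context: Let $G = \mathrm{GSp}_4$ be the group of $4\times 4$ matrices $g$ with $g^t J g = \nu(g) J$ for a scalar $\nu(g)$, where $J$ is the anti-diagonal matrix with anti-diagonal entries $(1,1,-1,-1)$ (reading rows top to bottom). Let $P \subset G$ be the Siegel parabolic (elements whose bottom-left $2\times2$ block is zero), $B_G$ the upper-triangular Borel, and $FL_G = P\backslash G$. For $g\in G$ let $c(g)$ be its bottom-left $2\times 2$ block; its row span depends only on $Pg$. The $B_G$-orbits on $FL_G$ are $C^G_{w_0},\dots,C^G_{w_3}$: $c(g)=0$; $c(g)$ of rank $1$ with row span $\langle(0,1)\rangle$; $c(g)$ of rank $1$ with row span $\neq\langle(0,1)\rangle$; $c(g)$ of rank $2$, respectively. Set $X^G_{w_2} = C^G_{w_0}\cup C^G_{w_1}\cup C^G_{w_2}$ (the closed locus where $c(g)$ is singular). For $\mathrm{GL}_2$ with upper-triangular Borel $B$, identify $B\backslash\mathrm{GL}_2 \cong \mathbf{P}^1$ by sending $Bg$ to the bottom row $(x:y)$ of $g$.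 Let $w = \begin{pmatrix}0&1\\-1&0\end{pmatrix}$. The Bruhat cells are $C^{\mathrm{GL}_2}_{\mathrm{id}} = \{(0:1)\}$ and $C^{\mathrm{GL}_2}_w = \{(x:y) : x \neq 0\}$; $Y^{\mathrm{GL}_2}_w = C^{\mathrm{GL}_2}_w$ (union of cells $\geq w$), and $C^{\mathrm{GL}_2}_w\cdot w^{-1} = B\backslash B\overline{B} = \{(x:y): y\neq 0\}$ with $\overline{B}$ the lower-triangular Borel. Let $H = \mathrm{GL}_2\times_{\mathrm{GL}_1}\mathrm{GL}_2$, $B_H$ its upper-triangular Borel, $FL_H = B_H\backslash H \cong \mathbf{P}^1\times\mathbf{P}^1$, with projections $\pi_1,\pi_2$ to the two factors. Let $\iota\colon H\to G$ be $\left[\begin{pmatrix}a&b\\c&d\end{pmatrix},\begin{pmatrix}a'&b'\\c'&d'\end{pmatrix}\right] \mapsto \begin{pmatrix}a&0&0&b\\0&a'&b'&0\\0&c'&d'&0\\c&0&0&d\end{pmatrix}$, and $\iota^\sharp\colon FL_H\to FL_G$, $B_Hh\mapsto P\iota(h)\tau^\sharp$, where $\tau^\sharp = \iota(\mathrm{id},w)^{-1}\tau w_2$, $\tau = \begin{pmatrix}1&0&0&0\\1&1&0&0\\0&0&1&0\\0&0&-1&1\end{pmatrix}$, and $w_2$ is the Kostant representative of $C^G_{w_2}$; explicitly $\iota^\sharp((x:y),(X:Y)) = Pg$ for some $g\in G$ with $c(g) = \begin{pmatrix}-X&Y\\-y&x\end{pmatrix}$. *)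

theory Defs
  imports "Jordan_Normal_Form.DL_Rank"
begin

(* Matrices over a field 'a, as Jordan_Normal_Form matrices (indices start at 0). *)

definition J4 :: "'a::field mat" where
  "J4 = mat_of_rows_list 4 [[0,0,0,1],[0,0,1,0],[0,-1,0,0],[-1,0,0,0]]"

definition GSp4 :: "'a::field mat set" where
  "GSp4 = {g \<in> carrier_mat 4 4. \<exists>\<nu>. \<nu> \<noteq> 0 \<and> g\<^sup>T * J4 * g = \<nu> \<cdot>\<^sub>m J4}"

(* Siegel parabolic (for documentation; FL_G = P\G) *)
definition siegelP :: "'a::field mat set" where
  "siegelP = {p \<in> GSp4. \<forall>i<2. \<forall>j<2. p $$ (i+2, j) = 0}"

definition cblock :: "'a::field mat \<Rightarrow> 'a mat" where
  "cblock g = mat 2 2 (\<lambda>(i,j). g $$ (i+2, j))"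

definition line01 :: "'a::field vec set" where
  "line01 = vec_space.row_space 2 (mat_of_rows_list 2 [[0,1]])"

definition crank :: "'a::field mat \<Rightarrow> nat" where
  "crank g = vec_space.rank 2 (cblock g)"

definition crowspan :: "'a::field mat \<Rightarrow> 'a vec set" where
  "crowspan g = vec_space.row_space 2 (cblock g)"

(* B_G-orbits on FL_G = P\G, represented by their (left P-invariant) preimages in G *)
definition CG0 :: "'a::field mat set" where
  "CG0 = {g \<in> GSp4. cblock g = 0\<^sub>m 2 2}"
definition CG1 :: "'a::field mat set" where
  "CG1 = {g \<in> GSp4. crank g = 1 \<and> crowspan g = line01}"
definition CG2 :: "'a::field mat set" where
  "CG2 = {g \<in> GSp4. crank g = 1 \<and> crowspan g \<noteq> line01}"
definition CG3 :: "'a::field mat set" where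
  "CG3 = {g \<in> GSp4. crank g = 2}"
definition XG2 :: "'a::field mat set" where
  "XG2 = CG0 \<union> CG1 \<union> CG2"

(* GL_2 and its flag variety B\GL_2 = P^1 via the bottom row (x:y) *)
definition GL2 :: "'a::field mat set" where
  "GL2 = {g \<in> carrier_mat 2 2. det g \<noteq> 0}"

definition wGL :: "'a::field mat" where
  "wGL = mat_of_rows_list 2 [[0,1],[-1,0]]"
definition wGL_inv :: "'a::field mat" where
  "wGL_inv = mat_of_rows_list 2 [[0,-1],[1,0]]"

(* Bruhat cells of GL_2 (as left B-invariant subsets of GL_2), bottom row (x:y) = (g10 : g11) *)
definition CGL_id :: "'a::field mat set" where
  "CGL_id = {g \<in> GL2. g $$ (1,0) = 0}"
definition CGL_w :: "'a::field mat set" where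
  "CGL_w = {g \<in> GL2. g $$ (1,0) \<noteq> 0}"
definition YGL_w :: "'a::field mat set" where
  "YGL_w = CGL_w"
definition CGL_w_winv :: "'a::field mat set" where
  "CGL_w_winv = (\<lambda>g. g * wGL_inv) ` CGL_w"

definition Hgrp :: "('a::field mat \<times> 'a mat) set" where
  "Hgrp = {(h1,h2). h1 \<in> GL2 \<and> h2 \<in> GL2 \<and> det h1 = det h2}"

definition iota :: "'a::field mat \<times> 'a mat \<Rightarrow> 'a mat" where
  "iota h = (case h of (h1,h2) \<Rightarrow> mat_of_rows_list 4
     [[h1 $$ (0,0), 0, 0, h1 $$ (0,1)],
      [0, h2 $$ (0,0), h2 $$ (0,1), 0],
      [0, h2 $$ (1,0), h2 $$ (1,1), 0],
      [h1 $$ (1,0), 0, 0, h1 $$ (1,1)]])"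

definition tau :: "'a::field mat" where
  "tau = mat_of_rows_list 4 [[1,0,0,0],[1,1,0,0],[0,0,1,0],[0,0,-1,1]]"

(* Kostant representative of C^G_{w_2} (c(w2) has row span <(1,0)>) *)
definition w2G :: "'a::field mat" where
  "w2G = mat_of_rows_list 4 [[0,1,0,0],[0,0,0,1],[1,0,0,0],[0,0,-1,0]]"

(* tau^sharp = iota(id,w)^{-1} tau w2, with iota(id,w)^{-1} = iota(id,w^{-1}) *)
definition tau_sharp :: "'a::field mat" where
  "tau_sharp = iota (1\<^sub>m 2, wGL_inv) * tau * w2G"

(* iota^sharp(B_H h) = P (iota h tau^sharp); we record the representative *)
definition iota_sharp :: "'a::field mat \<times> 'a mat \<Rightarrow> 'a mat" where
  "iota_sharp h = iota h * tau_sharp"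

end

theory Submission imports Defs begin

text \<open>With \<open>(x:y)\<close> and \<open>(X:Y)\<close> the bottom rows of \<open>h\<^sub>1\<close> and \<open>h\<^sub>2\<close>, the block
  \<open>c(\<iota>\<^sup>\<sharp>(h\<^sub>1,h\<^sub>2))\<close> has rows \<open>(-X, Y)\<close> and \<open>(-y, x)\<close>. If \<open>X \<noteq> 0\<close>, the first row is
  nonzero and not on the line \<open>\<langle>(0,1)\<rangle>\<close>, so of the cells making up \<open>X\<^sup>G\<^sub>w\<^sub>2\<close> only
  \<open>C\<^sup>G\<^sub>w\<^sub>2\<close> remains, where the block is singular: \<open>Yy = Xx\<close>. As \<open>(x,y) \<noteq> (0,0)\<close>,
  this forces \<open>y \<noteq> 0\<close>, which is exactly \<open>h\<^sub>1 \<in> C\<^sub>w w\<^sup>-\<^sup>1\<close>.\<close>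

lemma det_2x2:
  assumes A: "(A :: 'a::comm_ring_1 mat) \<in> carrier_mat 2 2"
  shows "det A = A $$ (0,0) * A $$ (1,1) - A $$ (0,1) * A $$ (1,0)"
proof -
  have minors: "mat_delete A 0 0 \<in> carrier_mat 1 1" "mat_delete A 0 1 \<in> carrier_mat 1 1"
    using mat_delete_carrier[OF A] by auto
  have "det A = (\<Sum>j<2. A $$ (0,j) * cofactor A 0 j)"
    using laplace_expansion_row[OF A] by simp
  also have "\<dots> = A $$ (0,0) * cofactor A 0 0 + A $$ (0,1) * cofactor A 0 1"
    by (simp add: numeral_2_eq_2)
  also have "cofactor A 0 0 = A $$ (1,1)"
    using A det_single[OF minors(1)] by (simp add: cofactor_def mat_delete_def)
  also have "cofactor A 0 1 = - A $$ (1,0)"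
    using A det_single[OF minors(2)] by (simp add: cofactor_def mat_delete_def)
  finally show ?thesis by simp
qed

lemma GL2_bottom_row_nonzero:
  assumes "h \<in> GL2"
  shows "h $$ (1,0) \<noteq> 0 \<or> h $$ (1,1) \<noteq> 0"
  using assms det_2x2[of h] by (auto simp: GL2_def)

lemma wGL_carrier: "wGL \<in> carrier_mat 2 2" and wGL_inv_carrier: "wGL_inv \<in> carrier_mat 2 2"
  by (auto simp: wGL_def wGL_inv_def mat_of_rows_list_def)

lemma wGL_mult_wGL_inv: "wGL * wGL_inv = 1\<^sub>m 2"
  by (rule eq_matI)
    (auto simp: wGL_def wGL_inv_def mat_of_rows_list_def scalar_prod_def numeral_eq_Suc less_Suc_eq)

lemma det_wGL: "det wGL = 1"
  unfolding det_2x2[OF wGL_carrier] by (simp add: wGL_def mat_of_rows_list_def)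

lemma det_wGL_inv: "det wGL_inv = 1"
  unfolding det_2x2[OF wGL_inv_carrier] by (simp add: wGL_inv_def mat_of_rows_list_def)

lemma mem_CGL_w_winv_iff: "h \<in> CGL_w_winv \<longleftrightarrow> h \<in> GL2 \<and> h $$ (1,1) \<noteq> 0"
proof
  assume "h \<in> CGL_w_winv"
  then obtain g where g: "g \<in> CGL_w" and h: "h = g * wGL_inv"
    by (auto simp: CGL_w_winv_def)
  have gc: "g \<in> carrier_mat 2 2" and "det g \<noteq> 0" "g $$ (1,0) \<noteq> 0"
    using g by (auto simp: CGL_w_def GL2_def)
  moreover have "h $$ (1,1) = - g $$ (1,0)"
    using gc by (simp add: h wGL_inv_def mat_of_rows_list_def scalar_prod_def numeral_eq_Suc)
  ultimately show "h \<in> GL2 \<and> h $$ (1,1) \<noteq> 0"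
    using det_mult[OF gc wGL_inv_carrier] mult_carrier_mat[OF gc wGL_inv_carrier]
    by (simp add: h GL2_def det_wGL_inv)
next
  assume "h \<in> GL2 \<and> h $$ (1,1) \<noteq> 0"
  then have hc: "h \<in> carrier_mat 2 2" and "det h \<noteq> 0" "h $$ (1,1) \<noteq> 0"
    by (auto simp: GL2_def)
  moreover have "det (h * wGL) = det h"
    using det_mult[OF hc wGL_carrier] by (simp add: det_wGL)
  moreover have "(h * wGL) $$ (1,0) = - h $$ (1,1)"
    using hc by (simp add: wGL_def mat_of_rows_list_def scalar_prod_def numeral_eq_Suc)
  ultimately have "h * wGL \<in> CGL_w"
    using mult_carrier_mat[OF hc wGL_carrier] by (simp add: CGL_w_def GL2_def)
  moreover have "h = h * wGL * wGL_inv"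
    using assoc_mult_mat[OF hc wGL_carrier wGL_inv_carrier] hc by (simp add: wGL_mult_wGL_inv)
  ultimately show "h \<in> CGL_w_winv"
    unfolding CGL_w_winv_def by blast
qed

lemma tau_sharp_eq:
  "tau_sharp = mat_of_rows_list 4 [[0,1,0,0], [-1,0,0,0], [0,1,0,1], [-1,0,-1,0]]"
  by (rule eq_matI)
    (auto simp: tau_sharp_def iota_def tau_def w2G_def wGL_inv_def mat_of_rows_list_def
      scalar_prod_def numeral_eq_Suc less_Suc_eq)

lemma cblock_iota_sharp:
  "cblock (iota_sharp (h\<^sub>1, h\<^sub>2)) =
     mat_of_rows_list 2 [[- h\<^sub>2 $$ (1,0), h\<^sub>2 $$ (1,1)], [- h\<^sub>1 $$ (1,1), h\<^sub>1 $$ (1,0)]]"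
  by (rule eq_matI)
    (auto simp: cblock_def iota_sharp_def tau_sharp_eq iota_def mat_of_rows_list_def
      scalar_prod_def numeral_eq_Suc less_Suc_eq)

lemma cblock_carrier: "cblock g \<in> carrier_mat 2 2"
  by (simp add: cblock_def)

lemma line01_first_coord:
  assumes "(w :: 'a::field vec) \<in> line01"
  shows "w $ 0 = 0"
proof -
  let ?M = "mat_of_rows_list 2 [[0,1]] :: 'a mat"
  have M: "?M \<in> carrier_mat 1 2"
    by (simp add: mat_of_rows_list_def)
  obtain y where "w = ?M\<^sup>T *\<^sub>v y" "y \<in> carrier_vec 1"
    using assms M by (auto simp: line01_def vec_space.row_space_eq[OF M])
  then show ?thesis
    using M by (simp add: mat_of_rows_list_def scalar_prod_def)
qed

lemma crowspan_ne_line01: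
  assumes "cblock g $$ (0,0) \<noteq> 0"
  shows "crowspan g \<noteq> line01"
proof
  have "(cblock g)\<^sup>T *\<^sub>v unit_vec 2 0 \<in> crowspan g"
    unfolding crowspan_def vec_space.row_space_eq[OF cblock_carrier]
    using cblock_carrier[of g] by auto
  moreover have "((cblock g)\<^sup>T *\<^sub>v unit_vec 2 0) $ 0 = cblock g $$ (0,0)"
    by (simp add: cblock_def scalar_prod_def numeral_eq_Suc)
  moreover assume "crowspan g = line01"
  ultimately show False
    using line01_first_coord assms by metis
qed

lemma XG2_imp_CG2:
  assumes "g \<in> XG2" and "cblock g $$ (0,0) \<noteq> 0"
  shows "g \<in> CG2"
proof -
  have "cblock g \<noteq> 0\<^sub>m 2 2"
    using assms(2) by auto
  then show ?thesis
    using assms crowspan_ne_line01 by (auto simp: XG2_def CG0_def CG1_def)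
qed

lemma CG2_cblock_singular:
  assumes "g \<in> CG2"
  shows "cblock g $$ (0,0) * cblock g $$ (1,1) = cblock g $$ (0,1) * cblock g $$ (1,0)"
proof -
  have "det (cblock g) = 0"
    using assms vec_space.det_rank_iff[OF cblock_carrier, of g] by (simp add: CG2_def crank_def)
  then show ?thesis
    unfolding det_2x2[OF cblock_carrier] by simp
qed

theorem mainTheorem2:
  shows "{h \<in> (Hgrp :: ('a::field mat \<times> 'a mat) set). iota_sharp h \<in> XG2}
           \<inter> {h \<in> Hgrp. snd h \<in> YGL_w}
       = {h \<in> Hgrp. iota_sharp h \<in> CG2}
           \<inter> {h \<in> Hgrp. fst h \<in> CGL_w_winv}
           \<inter> {h \<in> Hgrp. snd h \<in> CGL_w}"
proof -
  have "iota_sharp (h\<^sub>1, h\<^sub>2) \<in> CG2 \<and> h\<^sub>1 \<in> CGL_w_winv"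
    if "(h\<^sub>1, h\<^sub>2) \<in> Hgrp" "iota_sharp (h\<^sub>1, h\<^sub>2) \<in> XG2" "h\<^sub>2 \<in> CGL_w"
    for h\<^sub>1 h\<^sub>2 :: "'a mat"
  proof -
    have X: "h\<^sub>2 $$ (1,0) \<noteq> 0" and h\<^sub>1: "h\<^sub>1 \<in> GL2"
      using that by (auto simp: CGL_w_def Hgrp_def)
    have CG2: "iota_sharp (h\<^sub>1, h\<^sub>2) \<in> CG2"
      using XG2_imp_CG2[OF that(2)] X by (simp add: cblock_iota_sharp mat_of_rows_list_def)
    have "h\<^sub>2 $$ (1,1) * h\<^sub>1 $$ (1,1) = h\<^sub>2 $$ (1,0) * h\<^sub>1 $$ (1,0)"
      using CG2_cblock_singular[OF CG2]
      by (simp add: cblock_iota_sharp mat_of_rows_list_def algebra_simps)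
    then have "h\<^sub>1 $$ (1,1) \<noteq> 0"
      using X GL2_bottom_row_nonzero[OF h\<^sub>1] by auto
    then show ?thesis
      using CG2 h\<^sub>1 mem_CGL_w_winv_iff by blast
  qed
  moreover have "CG2 \<subseteq> XG2"
    by (auto simp: XG2_def)
  ultimately show ?thesis
    by (auto simp: YGL_w_def)
qed

end
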